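(* Let $X,Y$ be Banach spaces, $F:X\rightrightarrows Y$ a set-valued mapping with locally closed graph, and $(\bar x,\bar y)\in\operatorname{gr}F$. Suppose there are a neighborhood $W$ of $(\bar x,\bar y)$ and numbers $c>0$, $\lambda\in[0,1)$ such that for every $(x,y)\in W\cap\operatorname{gr}F$, $$\sup_{z\in S_Y} d\big(z,\ DF(x,y)(cB_X)\big)\le\lambda.$$ Then $\operatorname{sur}F(\bar x|\bar y)\ge\frac{1-\lambda}{c}$.
   Context: $S_Y$ is the unit sphere, $B_X$ the closed unit ball. The contingent cone $T(Q,z)$ to $Q$ at $z\in Q$ is the set of $h$ for which there are $t_k\searrow0$, $h_k\to h$ with $z+t_kh_k\in Q$. The contingent derivative is $DF(x,y)(h)=\{v:(h,v)\in T(\operatorname{gr}F,(x,y))\}$, and $DF(x,y)(cB_X)=\bigcup_{\|h\|\le c}DF(x,y)(h)$. $\operatorname{sur}F(\bar x|\bar y)$ is the supremum of $r>0$ for which there is $\varepsilon>0$ with $B(y,rt)\cap B(\bar y,\varepsilon)\subset F(B(x,t))$ for all $(x,y)\in\operatorname{gr}F$ with $\|x-\bar x\|<\varepsilon$ and all $t\ge0$ ($0$ if none). *)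

theory Defs
  imports "HOL-Analysis.Analysis"
begin

definition graph :: "('a \<Rightarrow> 'b set) \<Rightarrow> ('a \<times> 'b) set" where
  "graph F = {(x, y). y \<in> F x}"

definition locally_closed_graph ::
  "('a::real_normed_vector \<Rightarrow> 'b::real_normed_vector set) \<Rightarrow> 'a \<Rightarrow> 'b \<Rightarrow> bool" where
  "locally_closed_graph F xb yb \<longleftrightarrow>
     (\<exists>r>0. closed (graph F \<inter> (cball xb r \<times> cball yb r)))"

definition contingent_cone :: "'a::real_normed_vector set \<Rightarrow> 'a \<Rightarrow> 'a set" where
  "contingent_cone Q z = {h. \<exists>(t::nat \<Rightarrow> real) hk.
      (\<forall>k. t k > 0) \<and> decseq t \<and> t \<longlonglongrightarrow> 0 \<and> hk \<longlonglongrightarrow> h \<and>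
      (\<forall>k. z + t k *\<^sub>R hk k \<in> Q)}"

definition contingent_derivative ::
  "('a::real_normed_vector \<Rightarrow> 'b::real_normed_vector set) \<Rightarrow> 'a \<Rightarrow> 'b \<Rightarrow> 'a \<Rightarrow> 'b set" where
  "contingent_derivative F x y h = {v. (h, v) \<in> contingent_cone (graph F) (x, y)}"

definition contingent_derivative_ball ::
  "('a::real_normed_vector \<Rightarrow> 'b::real_normed_vector set) \<Rightarrow> 'a \<Rightarrow> 'b \<Rightarrow> real \<Rightarrow> 'b set" where
  "contingent_derivative_ball F x y c = (\<Union>h\<in>cball 0 c. contingent_derivative F x y h)"

definition sur_rates ::
  "('a::real_normed_vector \<Rightarrow> 'b::real_normed_vector set) \<Rightarrow> 'a \<Rightarrow> 'b \<Rightarrow> real set" where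
  "sur_rates F xb yb = {r. r > 0 \<and> (\<exists>\<epsilon>>0. \<forall>x y t. (x, y) \<in> graph F \<and> norm (x - xb) < \<epsilon> \<and> t \<ge> 0 \<longrightarrow>
      ball y (r * t) \<inter> ball yb \<epsilon> \<subseteq> (\<Union>u\<in>ball x t. F u))}"

definition sur :: "('a::real_normed_vector \<Rightarrow> 'b::real_normed_vector set) \<Rightarrow> 'a \<Rightarrow> 'b \<Rightarrow> ereal" where
  "sur F xb yb = (if sur_rates F xb yb = {} then 0 else Sup (ereal ` sur_rates F xb yb))"

end

theory Submission
  imports Defs
begin

text \<open>Fix a rate \<open>r < (1 - lam) / c\<close>, a graph point \<open>(x, y)\<close> near \<open>(xb, yb)\<close> and a target \<open>v\<close>
  near \<open>y\<close>. Ekeland's variational principle, applied on the locally closed graph to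
  \<open>(x', y') \<mapsto> \<parallel>y' - v\<parallel>\<close> with the weighted distance \<open>r (\<parallel>x' - x''\<parallel> + \<alpha> \<parallel>y' - y''\<parallel>)\<close>, yields a graph
  point \<open>(u, w)\<close> with \<open>\<parallel>u - x\<parallel> \<le> \<parallel>y - v\<parallel> / r\<close> that locally minimises the perturbed function.
  If \<open>w \<noteq> v\<close>, the hypothesis gives a contingent direction \<open>(h, k)\<close> with \<open>\<parallel>h\<parallel> \<le> c\<close> and \<open>k\<close> within
  \<open>lam\<close> of the unit vector from \<open>w\<close> towards \<open>v\<close>; since \<open>lam + r (c + 2 \<alpha>) < 1\<close>, moving along it
  decreases the perturbed function. Hence \<open>w = v\<close>, i.e. \<open>v \<in> F u\<close>: \<open>F\<close> is open at linear rate \<open>r\<close>.\<close>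

locale ekeland_gauge =
  fixes S :: "'c::complete_space set" and f :: "'c \<Rightarrow> real" and D :: "'c \<Rightarrow> 'c \<Rightarrow> real"
    and \<kappa> :: real
  assumes closed_S: "closed S"
    and f_nonneg: "\<And>p. p \<in> S \<Longrightarrow> 0 \<le> f p"
    and continuous_f: "continuous_on S f"
    and D_triangle: "\<And>p q r. D p r \<le> D p q + D q r"
    and D_refl: "\<And>p. D p p = 0"
    and kappa_pos: "0 < \<kappa>"
    and D_lower: "\<And>p q. \<kappa> * dist p q \<le> D p q"
    and continuous_D: "\<And>p. continuous_on UNIV (\<lambda>q. D q p)"
begin

definition slice :: "'c \<Rightarrow> 'c set" where
  "slice p = {q \<in> S. f q + D q p \<le> f p}"

lemma D_nonneg: "0 \<le> D p q"
  using D_lower[of p q] kappa_pos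
  by (metis order_trans mult_nonneg_nonneg zero_le_dist less_eq_real_def)

lemma slice_self: "p \<in> S \<Longrightarrow> p \<in> slice p"
  by (simp add: slice_def D_refl)

lemma slice_subset: "slice p \<subseteq> S"
  by (auto simp: slice_def)

lemma closed_slice: "closed (slice p)"
  unfolding slice_def
  by (rule continuous_on_closed_Collect_le[OF _ continuous_on_const closed_S])
    (intro continuous_intros continuous_f continuous_on_subset[OF continuous_D], auto)

lemma slice_trans:
  assumes "q \<in> slice p"
  shows "slice q \<subseteq> slice p"
proof
  fix r assume "r \<in> slice q"
  with assms D_triangle[of r p q] show "r \<in> slice p" by (auto simp: slice_def)
qed

lemma bdd_below_slice: "bdd_below (f ` slice p)"
  using f_nonneg slice_subset by (auto intro!: bdd_belowI[of _ 0])

lemma Inf_slice_le: "q \<in> slice p \<Longrightarrow> Inf (f ` slice p) \<le> f q"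
  using bdd_below_slice by (auto intro: cInf_lower)

end

locale ekeland_chain = ekeland_gauge +
  fixes P :: "nat \<Rightarrow> 'a"
  assumes P0_in: "P 0 \<in> S"
    and P_slice: "\<And>n. P (Suc n) \<in> slice (P n)"
    and P_near_inf: "\<And>n. f (P (Suc n)) \<le> Inf (f ` slice (P n)) + (1/2)^n"
begin

lemma P_in: "P n \<in> S"
  using P0_in P_slice slice_subset by (cases n) auto

lemma slice_antimono: "n \<le> m \<Longrightarrow> slice (P m) \<subseteq> slice (P n)"
proof (induction m rule: dec_induct)
  case (step m)
  then show ?case using slice_trans[OF P_slice[of m]] by blast
qed simp

lemma P_in_slice: "n \<le> m \<Longrightarrow> P m \<in> slice (P n)"
  using slice_antimono slice_self[OF P_in] by blast

lemma D_le_in_slice: "q \<in> slice (P (Suc n)) \<Longrightarrow> D q (P (Suc n)) \<le> (1/2)^n"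
  using P_near_inf[of n] Inf_slice_le[of q "P n"] slice_antimono[of n "Suc n"]
  by (fastforce simp: slice_def)

lemma Cauchy_P: "Cauchy P"
proof (rule metric_CauchyI)
  have P_dist: "dist (P m) (P (Suc n)) \<le> (1/2)^n / \<kappa>" if "Suc n \<le> m" for m n
    using order_trans[OF D_lower D_le_in_slice[OF P_in_slice[OF that]]] kappa_pos
    by (simp add: field_simps mult.commute)
  fix \<epsilon> :: real assume "\<epsilon> > 0"
  then obtain N where N: "(1/2::real)^N < \<epsilon> * \<kappa> / 2"
    using real_arch_pow_inv[of "\<epsilon> * \<kappa> / 2" "1/2"] kappa_pos by auto
  have "dist (P m) (P n) < \<epsilon>" if "m \<ge> Suc N" "n \<ge> Suc N" for m n
  proof -
    have "dist (P m) (P n) \<le> (1/2)^N / \<kappa> + (1/2)^N / \<kappa>"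
      using P_dist[OF that(1)] P_dist[OF that(2)] dist_triangle3[of "P m" "P n" "P (Suc N)"]
      by (simp add: dist_commute)
    also have "\<dots> < \<epsilon>" using N kappa_pos by (simp add: field_simps)
    finally show ?thesis .
  qed
  then show "\<exists>M. \<forall>m\<ge>M. \<forall>n\<ge>M. dist (P m) (P n) < \<epsilon>" by blast
qed

lemma limit_in_slice:
  assumes "P \<longlonglongrightarrow> p"
  shows "p \<in> slice (P n)"
  using closed_sequentially[OF closed_slice _ LIMSEQ_ignore_initial_segment[OF assms, of n]]
    P_in_slice by simp

lemma limit_minimal:
  assumes "P \<longlonglongrightarrow> p" and "q \<in> S"
  shows "f p \<le> f q + D q p"
proof (rule ccontr)
  assume "\<not> ?thesis"
  then have "q \<in> slice p" using assms(2) by (simp add: slice_def)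
  then have q_in: "q \<in> slice (P n)" for n using slice_trans[OF limit_in_slice[OF assms(1)]] by blast
  have le: "f p \<le> f q + (1/2)^n" for n
  proof -
    have "f p + D p (P (Suc n)) \<le> f (P (Suc n))"
      using limit_in_slice[OF assms(1), of "Suc n"] by (simp add: slice_def)
    then show ?thesis
      using P_near_inf[of n] Inf_slice_le[OF q_in[of n]] D_nonneg[of p "P (Suc n)"] by linarith
  qed
  have "f p \<le> f q"
  proof (rule ccontr)
    assume "\<not> f p \<le> f q"
    then obtain N where "(1/2::real)^N < f p - f q"
      using real_arch_pow_inv[of "f p - f q" "1/2"] by auto
    with le[of N] show False by simp
  qed
  with \<open>\<not> ?thesis\<close> D_nonneg[of q p] show False by linarith
qed

end

context ekeland_gauge
begin

lemma ekeland_chain_exists: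
  assumes "x0 \<in> S"
  obtains P where "ekeland_chain S f D \<kappa> P" and "P 0 = x0"
proof -
  have "\<exists>q. q \<in> slice p \<and> f q \<le> Inf (f ` slice p) + (1/2)^n" if "p \<in> S" for p n
  proof -
    have ne: "f ` slice p \<noteq> {}" using slice_self[OF that] by blast
    have "Inf (f ` slice p) < Inf (f ` slice p) + (1/2)^n" by simp
    then obtain y where "y \<in> f ` slice p" "y < Inf (f ` slice p) + (1/2)^n"
      using cInf_lessD[OF ne] by blast
    then show ?thesis by (blast intro: less_imp_le)
  qed
  then obtain P where P: "\<forall>n. (P n \<in> S \<and> (n = 0 \<longrightarrow> P n = x0)) \<and>
      (P (Suc n) \<in> slice (P n) \<and> f (P (Suc n)) \<le> Inf (f ` slice (P n)) + (1/2)^n)"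
    using dependent_nat_choice[of "\<lambda>n x. x \<in> S \<and> (n = 0 \<longrightarrow> x = x0)"
        "\<lambda>n x y. y \<in> slice x \<and> f y \<le> Inf (f ` slice x) + (1/2)^n"]
      assms slice_subset by blast
  have "ekeland_chain S f D \<kappa> P"
    by unfold_locales (use P in auto)
  with P show thesis using that by blast
qed

theorem variational_principle:
  assumes "x0 \<in> S"
  shows "\<exists>p\<in>S. f p + D p x0 \<le> f x0 \<and> (\<forall>q\<in>S. f p \<le> f q + D q p)"
proof -
  obtain P where chain: "ekeland_chain S f D \<kappa> P" and "P 0 = x0"
    using ekeland_chain_exists[OF assms] by blast
  interpret ekeland_chain S f D \<kappa> P by (fact chain)
  obtain p where lim: "P \<longlonglongrightarrow> p"
    using Cauchy_P Cauchy_convergent_iff convergent_def by blast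
  have "p \<in> S" "f p + D p x0 \<le> f x0"
    using limit_in_slice[OF lim, of 0] slice_subset \<open>P 0 = x0\<close> by (auto simp: slice_def)
  then show ?thesis using limit_minimal[OF lim] by blast
qed

end

lemma dist_le_dist_fst_plus_dist_snd:
  "dist p q \<le> dist (fst p) (fst q) + dist (snd p) (snd q)"
  by (metis dist_Pair_Pair prod.collapse sqrt_sum_squares_le_sum zero_le_dist)

lemma ekeland_gauge_weighted_distance:
  fixes S :: "('a::banach \<times> 'b::banach) set"
  assumes "closed S" and "0 < r" and "0 < \<alpha>"
  shows "ekeland_gauge S (\<lambda>p. dist (snd p) v)
           (\<lambda>p q. r * (dist (fst p) (fst q) + \<alpha> * dist (snd p) (snd q))) (r * min 1 \<alpha>)"
proof
  fix p q s :: "'a \<times> 'b"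
  show "r * (dist (fst p) (fst s) + \<alpha> * dist (snd p) (snd s)) \<le>
      r * (dist (fst p) (fst q) + \<alpha> * dist (snd p) (snd q)) +
      r * (dist (fst q) (fst s) + \<alpha> * dist (snd q) (snd s))"
  proof -
    have "dist (fst p) (fst s) + \<alpha> * dist (snd p) (snd s) \<le>
        (dist (fst p) (fst q) + \<alpha> * dist (snd p) (snd q)) +
        (dist (fst q) (fst s) + \<alpha> * dist (snd q) (snd s))"
      using dist_triangle[of "fst p" "fst s" "fst q"]
        mult_left_mono[OF dist_triangle[of "snd p" "snd s" "snd q"], of \<alpha>] assms(3)
      by (simp add: distrib_left)
    then show ?thesis
      using mult_left_mono[OF _ less_imp_le[OF assms(2)]] by (metis distrib_left)
  qed
  have "min 1 \<alpha> * dist p q \<le> min 1 \<alpha> * (dist (fst p) (fst q) + dist (snd p) (snd q))"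
    using dist_le_dist_fst_plus_dist_snd[of p q] assms by (intro mult_left_mono) auto
  also have "\<dots> \<le> dist (fst p) (fst q) + \<alpha> * dist (snd p) (snd q)"
    using mult_right_mono[OF min.cobounded1 zero_le_dist, of 1 \<alpha> "fst p" "fst q"]
      mult_right_mono[OF min.cobounded2 zero_le_dist, of 1 \<alpha> "snd p" "snd q"]
    by (simp add: distrib_left)
  finally show "r * min 1 \<alpha> * dist p q \<le> r * (dist (fst p) (fst q) + \<alpha> * dist (snd p) (snd q))"
    using assms by (simp add: mult.assoc mult_left_mono)
qed (use assms in \<open>auto intro!: continuous_intros\<close>)

lemma zero_in_contingent_derivative_ball:
  assumes "(x, y) \<in> graph F" and "0 \<le> c"
  shows "0 \<in> contingent_derivative_ball F x y c"
proof -
  have "(0, 0) \<in> contingent_cone (graph F) (x, y)"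
    unfolding contingent_cone_def
  proof (intro CollectI exI conjI allI)
    show "0 < 1 / (real k + 1)" for k by simp
    show "decseq (\<lambda>k. 1 / (real k + 1))"
      by (rule decseq_SucI) (simp add: field_simps)
    show "(\<lambda>k. 1 / (real k + 1)) \<longlonglongrightarrow> 0"
      using LIMSEQ_inverse_real_of_nat by (simp add: inverse_eq_divide add.commute)
    show "(\<lambda>k. 0) \<longlonglongrightarrow> (0, 0)" by (simp add: zero_prod_def)
    show "(x, y) + (1 / (real k + 1)) *\<^sub>R 0 \<in> graph F" for k using assms by simp
  qed
  then show ?thesis
    using assms unfolding contingent_derivative_ball_def contingent_derivative_def by force
qed

lemma difference_quotient_bound:
  fixes u a :: "'a::real_normed_vector" and v w b :: "'b::real_normed_vector"
  assumes descent: "dist w v \<le> dist (w + \<tau> *\<^sub>R b) v + r * (norm (\<tau> *\<^sub>R a) + \<alpha> * norm (\<tau> *\<^sub>R b))"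
    and "0 < \<tau>" and "\<tau> < dist v w"
  shows "1 \<le> dist b (sgn (v - w)) + r * (norm a + \<alpha> * norm b)"
proof -
  define z where "z = sgn (v - w)"
  define d where "d = dist v w"
  have "w \<noteq> v" using \<open>\<tau> < dist v w\<close> \<open>0 < \<tau>\<close> by auto
  then have "norm z = 1" and "v - w = d *\<^sub>R z"
    by (simp_all add: z_def d_def norm_sgn dist_norm sgn_div_norm)
  then have "w + \<tau> *\<^sub>R b - v = (\<tau> - d) *\<^sub>R z + \<tau> *\<^sub>R (b - z)"
    by (simp add: algebra_simps)
  then have "dist (w + \<tau> *\<^sub>R b) v \<le> (d - \<tau>) + \<tau> * dist b z"
    using norm_triangle_ineq[of "(\<tau> - d) *\<^sub>R z" "\<tau> *\<^sub>R (b - z)"] \<open>norm z = 1\<close> assms(2,3)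
    by (simp add: d_def dist_norm abs_of_pos)
  with descent \<open>0 < \<tau>\<close> have "\<tau> * 1 \<le> \<tau> * (dist b z + r * (norm a + \<alpha> * norm b))"
    by (simp add: d_def dist_commute algebra_simps)
  then show ?thesis using \<open>0 < \<tau>\<close> by (simp only: z_def mult_le_cancel_left_pos)
qed

lemma local_minimiser_contingent_bound:
  fixes F :: "'a::real_normed_vector \<Rightarrow> 'b::real_normed_vector set"
  assumes local_min: "\<And>q. q \<in> graph F \<Longrightarrow> dist q (u, w) < \<delta> \<Longrightarrow>
      dist w v \<le> dist (snd q) v + r * (dist (fst q) u + \<alpha> * dist (snd q) w)"
    and "0 < \<delta>" and "w \<noteq> v"
    and "(h, k) \<in> contingent_cone (graph F) (u, w)"
  shows "1 \<le> dist k (sgn (v - w)) + r * (norm h + \<alpha> * norm k)"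
proof -
  obtain t :: "nat \<Rightarrow> real" and hs where t_pos: "\<And>n. 0 < t n" and t_lim: "t \<longlonglongrightarrow> 0"
    and hs_lim: "hs \<longlonglongrightarrow> (h, k)" and hs_graph: "\<And>n. (u, w) + t n *\<^sub>R hs n \<in> graph F"
    using assms(4) unfolding contingent_cone_def by blast
  define a where "a n = fst (hs n)" for n
  define b where "b n = snd (hs n)" for n
  have "eventually (\<lambda>n. t n < dist v w) sequentially"
    using order_tendstoD(2)[OF t_lim] \<open>w \<noteq> v\<close> by simp
  moreover have "((\<lambda>n. (u, w) + t n *\<^sub>R hs n) \<longlonglongrightarrow> (u, w))"
    using tendsto_add[OF tendsto_const[of "(u, w)"] tendsto_scaleR[OF t_lim hs_lim]] by simp
  then have "eventually (\<lambda>n. dist ((u, w) + t n *\<^sub>R hs n) (u, w) < \<delta>) sequentially"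
    using tendstoD \<open>0 < \<delta>\<close> by blast
  ultimately have "eventually (\<lambda>n.
      1 \<le> dist (b n) (sgn (v - w)) + r * (norm (a n) + \<alpha> * norm (b n))) sequentially"
  proof eventually_elim
    case (elim n)
    have "(u, w) + t n *\<^sub>R hs n = (u + t n *\<^sub>R a n, w + t n *\<^sub>R b n)"
      by (simp add: a_def b_def prod_eq_iff)
    then show ?case
      using local_min[OF hs_graph elim(2)] t_pos elim(1)
      by (intro difference_quotient_bound) (simp_all add: dist_norm)
  qed
  moreover have "(\<lambda>n. dist (b n) (sgn (v - w)) + r * (norm (a n) + \<alpha> * norm (b n)))
      \<longlonglongrightarrow> dist k (sgn (v - w)) + r * (norm h + \<alpha> * norm k)"
    unfolding a_def b_def using hs_lim by (intro tendsto_intros) (auto dest: tendsto_fst tendsto_snd)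
  ultimately show ?thesis by (intro tendsto_lowerbound) auto
qed

lemma local_minimiser_reaches_target:
  fixes F :: "'a::real_normed_vector \<Rightarrow> 'b::real_normed_vector set"
  assumes local_min: "\<And>q. q \<in> graph F \<Longrightarrow> dist q (u, w) < \<delta> \<Longrightarrow>
      dist w v \<le> dist (snd q) v + r * (dist (fst q) u + \<alpha> * dist (snd q) w)"
    and "0 < \<delta>" and "(u, w) \<in> graph F"
    and regular: "\<forall>z\<in>sphere 0 1. infdist z (contingent_derivative_ball F u w c) \<le> lam"
    and "lam + r * (c + 2 * \<alpha>) < 1" and "0 \<le> r" and "0 \<le> \<alpha>" and "0 \<le> c"
  shows "w = v"
proof (rule ccontr)
  assume "w \<noteq> v"
  define z where "z = sgn (v - w)"
  define DS where "DS = contingent_derivative_ball F u w c"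
  have "norm z = 1" using \<open>w \<noteq> v\<close> by (simp add: z_def norm_sgn)
  then have "infdist z DS \<le> lam"
    using regular by (simp add: DS_def)
  then have "infdist z DS < 1 - r * (c + 2 * \<alpha>)"
    using assms(5) by linarith
  moreover have "DS \<noteq> {}"
    using zero_in_contingent_derivative_ball[OF assms(3,8)] by (auto simp: DS_def)
  ultimately obtain k where "k \<in> DS" and k_z: "dist z k < 1 - r * (c + 2 * \<alpha>)"
    by (auto simp: infdist_notempty cINF_less_iff)
  then obtain h where "norm h \<le> c" and hk: "(h, k) \<in> contingent_cone (graph F) (u, w)"
    by (auto simp: DS_def contingent_derivative_ball_def contingent_derivative_def)
  have "0 \<le> r * (c + 2 * \<alpha>)" using assms(6-8) by simp
  then have "norm k \<le> 2"
    using k_z norm_triangle_ineq3[of k z] \<open>norm z = 1\<close> by (simp add: dist_norm norm_minus_commute)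
  then have "r * (norm h + \<alpha> * norm k) \<le> r * (c + 2 * \<alpha>)"
    using \<open>norm h \<le> c\<close> assms(6,7) by (intro mult_left_mono add_mono) (auto simp: mult.commute mult_left_mono)
  with k_z have "dist k z + r * (norm h + \<alpha> * norm k) < 1"
    by (simp add: dist_commute)
  with local_minimiser_contingent_bound[OF local_min assms(2) \<open>w \<noteq> v\<close> hk] show False
    by (simp add: z_def)
qed

lemma mem_ball_Times_if_dist_less:
  assumes "dist q p < s" and "dist (fst p) a + s \<le> R" and "dist (snd p) b + s \<le> R"
  shows "q \<in> ball a R \<times> ball b R"
  using assms dist_triangle[of a "fst q" "fst p"] dist_triangle[of b "snd q" "snd p"]
    order_le_less_trans[OF dist_fst_le assms(1)] order_le_less_trans[OF dist_snd_le assms(1)]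
  by (auto simp: mem_Times_iff dist_commute)

lemma ekeland_covering_step:
  fixes F :: "'a::banach \<Rightarrow> 'b::banach set"
  assumes closed: "closed (graph F \<inter> (cball xb R \<times> cball yb R))"
    and regular: "\<And>x y. (x, y) \<in> graph F \<Longrightarrow> dist x xb < R \<Longrightarrow> dist y yb < R \<Longrightarrow>
        \<forall>z\<in>sphere 0 1. infdist z (contingent_derivative_ball F x y c) \<le> lam"
    and margin: "lam + r * (c + 2 * \<alpha>) < 1" and "0 \<le> c" and "0 < r" and "0 < \<alpha>"
    and xy: "(x, y) \<in> graph F" and x: "dist x xb < R / 4" and y: "dist y yb < R / 4"
    and v: "dist v y < r * min 1 \<alpha> * R / 2"
  shows "\<exists>u. v \<in> F u \<and> dist u x \<le> dist y v / r"
proof -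
  define G where "G = graph F \<inter> (cball xb R \<times> cball yb R)"
  define D where "D p q = r * (dist (fst p) (fst q) + \<alpha> * dist (snd p) (snd q))" for p q :: "'a \<times> 'b"
  define \<kappa> where "\<kappa> = r * min 1 \<alpha>"
  interpret ekeland_gauge G "\<lambda>p. dist (snd p) v" D \<kappa>
    unfolding G_def D_def \<kappa>_def using closed \<open>0 < r\<close> \<open>0 < \<alpha>\<close>
    by (rule ekeland_gauge_weighted_distance)
  have "dist x xb \<le> R" "dist y yb \<le> R"
    using x y zero_le_dist[of x xb] zero_le_dist[of y yb] by linarith+
  then have "(x, y) \<in> G" using xy by (simp add: G_def dist_commute)
  then obtain u w where "(u, w) \<in> G" and E1: "dist w v + D (u, w) (x, y) \<le> dist y v"
    and E2: "\<And>q. q \<in> G \<Longrightarrow> dist w v \<le> dist (snd q) v + D q (u, w)"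
    using variational_principle by fastforce
  have "\<kappa> * dist (u, w) (x, y) < \<kappa> * (R / 2)"
    using D_lower[of "(u, w)" "(x, y)"] E1 v zero_le_dist[of w v] dist_commute[of v y]
    unfolding \<kappa>_def by linarith
  then have "dist (u, w) (x, y) < R / 2" using kappa_pos by simp
  from mem_ball_Times_if_dist_less[OF this, of xb "3 * R / 4" yb]
  have "(u, w) \<in> ball xb (3 * R / 4) \<times> ball yb (3 * R / 4)" using x y by simp
  then have u: "dist u xb < 3 * R / 4" and w: "dist w yb < 3 * R / 4"
    by (simp_all add: dist_commute)
  have local: "q \<in> G" if "q \<in> graph F" "dist q (u, w) < R / 4" for q
    using that mem_ball_Times_if_dist_less[OF that(2), of xb R yb] u w
    by (auto simp: G_def)
  have "0 < R" using x zero_le_dist[of x xb] by linarith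
  then have "\<forall>z\<in>sphere 0 1. infdist z (contingent_derivative_ball F u w c) \<le> lam"
    using regular[of u w] \<open>(u, w) \<in> G\<close> u w by (simp add: G_def)
  then have "w = v"
    using local_minimiser_reaches_target[of F u w "R / 4" v r \<alpha> c lam] local \<open>(u, w) \<in> G\<close>
      E2 margin \<open>0 \<le> c\<close> \<open>0 < r\<close> \<open>0 < \<alpha>\<close> \<open>0 < R\<close>
    by (auto simp: G_def D_def)
  moreover have "0 \<le> r * (\<alpha> * dist w y)" using \<open>0 < r\<close> \<open>0 < \<alpha>\<close> by simp
  then have "r * dist u x \<le> dist y v"
    using E1 zero_le_dist[of w v] unfolding D_def distrib_left fst_conv snd_conv by linarith
  ultimately show ?thesis
    using \<open>(u, w) \<in> G\<close> \<open>0 < r\<close> by (auto simp: G_def graph_def field_simps)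
qed

lemma local_covering:
  fixes F :: "'a::banach \<Rightarrow> 'b::banach set"
  assumes closed: "closed (graph F \<inter> (cball xb R \<times> cball yb R))" and "0 < R"
    and regular: "\<And>x y. (x, y) \<in> graph F \<Longrightarrow> dist x xb < R \<Longrightarrow> dist y yb < R \<Longrightarrow>
        \<forall>z\<in>sphere 0 1. infdist z (contingent_derivative_ball F x y c) \<le> lam"
    and "0 \<le> c" and "0 < r" and "r * c < 1 - lam"
  obtains \<delta> where "0 < \<delta>"
    and "\<And>x y v. (x, y) \<in> graph F \<Longrightarrow> dist x xb < \<delta> \<Longrightarrow> dist y yb < \<delta> \<Longrightarrow> dist v y < \<delta> \<Longrightarrow>
        \<exists>u. v \<in> F u \<and> dist u x \<le> dist y v / r"
proof -
  define \<alpha> where "\<alpha> = (1 - lam - r * c) / (4 * r)"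
  have "0 < \<alpha>" using assms(5,6) by (simp add: \<alpha>_def)
  have "r * (2 * \<alpha>) = (1 - lam - r * c) / 2" using assms(5) by (simp add: \<alpha>_def)
  then have margin: "lam + r * (c + 2 * \<alpha>) < 1" using assms(6) by (simp add: distrib_left)
  define \<delta> where "\<delta> = min (R / 4) (r * min 1 \<alpha> * R / 2)"
  show thesis
  proof (rule that)
    show "0 < \<delta>" using \<open>0 < R\<close> \<open>0 < r\<close> \<open>0 < \<alpha>\<close> by (simp add: \<delta>_def)
    fix x y v
    assume "(x, y) \<in> graph F" and "dist x xb < \<delta>" and "dist y yb < \<delta>" and "dist v y < \<delta>"
    then show "\<exists>u. v \<in> F u \<and> dist u x \<le> dist y v / r"
      by (intro ekeland_covering_step[OF closed regular margin assms(4,5) \<open>0 < \<alpha>\<close>])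
        (simp_all add: \<delta>_def)
  qed
qed

text \<open>Points \<open>v\<close> that are far from \<open>y\<close> relative to \<open>\<epsilon>\<close> are reached from the base point \<open>(xb, yb)\<close>
  instead of from \<open>(x, y)\<close>; the choice \<open>\<epsilon> = \<delta> / (r + 2)\<close> makes this detour affordable.\<close>
lemma local_covering_imp_sur_rate:
  assumes base: "(xb, yb) \<in> graph F" and "0 < \<delta>"
    and cover: "\<And>x y v. (x, y) \<in> graph F \<Longrightarrow> dist x xb < \<delta> \<Longrightarrow> dist y yb < \<delta> \<Longrightarrow> dist v y < \<delta> \<Longrightarrow>
        \<exists>u. v \<in> F u \<and> dist u x \<le> dist y v / r'"
    and "0 < r" and "r < r'"
  shows "r \<in> sur_rates F xb yb"
  unfolding sur_rates_def
proof (intro CollectI conjI exI[of _ "\<delta> / (r + 2)"] allI impI subsetI)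
  show "0 < r" by fact
  define \<epsilon> where "\<epsilon> = \<delta> / (r + 2)"
  show "0 < \<delta> / (r + 2)" using \<open>0 < \<delta>\<close> \<open>0 < r\<close> by simp
  then have "0 < \<epsilon>" by (simp add: \<epsilon>_def)
  have \<epsilon>_eq: "\<delta> = \<epsilon> * (r + 2)" using \<open>0 < r\<close> by (simp add: \<epsilon>_def)
  have "\<epsilon> \<le> \<delta>" using \<epsilon>_eq \<open>0 < \<epsilon>\<close> \<open>0 < r\<close> by simp
  fix x y t v
  assume xy_t: "(x, y) \<in> graph F \<and> norm (x - xb) < \<delta> / (r + 2) \<and> 0 \<le> t"
    and "v \<in> ball y (r * t) \<inter> ball yb (\<delta> / (r + 2))"
  then have y_v: "dist y v < r * t" and yb_v: "dist yb v < \<epsilon>"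
    by (simp_all only: \<epsilon>_def Int_iff mem_ball)
  have xy: "(x, y) \<in> graph F" and x: "dist x xb < \<epsilon>"
    using xy_t by (simp_all only: \<epsilon>_def dist_norm)
  show "v \<in> (\<Union>u\<in>ball x t. F u)"
  proof (cases "dist y yb < \<delta> \<and> dist v y < \<delta>")
    case True
    have "dist x xb < \<delta>" using x \<open>\<epsilon> \<le> \<delta>\<close> by linarith
    then obtain u where "v \<in> F u" and u: "dist u x \<le> dist y v / r'"
      using cover[OF xy _ conjunct1[OF True] conjunct2[OF True]] by blast
    have "dist y v / r' \<le> dist y v / r" using \<open>0 < r\<close> \<open>r < r'\<close> by (simp add: frac_le)
    also have "\<dots> < t" using y_v \<open>0 < r\<close> by (simp add: pos_divide_less_eq mult.commute)
    finally show ?thesis using \<open>v \<in> F u\<close> u by (auto simp: dist_commute)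
  next
    case False
    have "dist v yb < \<delta>" using yb_v \<open>\<epsilon> \<le> \<delta>\<close> by (simp add: dist_commute)
    with \<open>0 < \<delta>\<close> obtain u where "v \<in> F u" and u: "dist u xb \<le> dist yb v / r'"
      using cover[OF base] by auto
    have "dist yb v / r' < \<epsilon> / r'"
      using yb_v \<open>0 < r\<close> \<open>r < r'\<close> by (simp add: divide_strict_right_mono)
    then have "dist x u < \<epsilon> + \<epsilon> / r'"
      using u x dist_triangle[of x u xb] dist_commute[of xb u] by linarith
    have "\<delta> - \<epsilon> \<le> dist y v"
    proof (cases "dist y yb < \<delta>")
      case True
      then show ?thesis using False \<open>0 < \<epsilon>\<close> by (simp add: dist_commute)
    next
      case False
      then show ?thesis using yb_v dist_triangle[of y yb v] by (simp add: dist_commute)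
    qed
    have "r * (\<epsilon> / r') \<le> \<epsilon>"
      using mult_right_mono[of "r / r'" 1 \<epsilon>] \<open>0 < \<epsilon>\<close> \<open>0 < r\<close> \<open>r < r'\<close> by simp
    have "r * dist x u < r * (\<epsilon> + \<epsilon> / r')"
      using \<open>dist x u < \<epsilon> + \<epsilon> / r'\<close> \<open>0 < r\<close> by simp
    also have "\<dots> \<le> r * \<epsilon> + \<epsilon>"
      using \<open>r * (\<epsilon> / r') \<le> \<epsilon>\<close> by (simp add: distrib_left)
    also have "\<dots> = \<delta> - \<epsilon>" using \<epsilon>_eq by (simp add: algebra_simps)
    also have "\<dots> < r * t" using \<open>\<delta> - \<epsilon> \<le> dist y v\<close> y_v by simp
    finally have "r * dist x u < r * t" .
    then show ?thesis using \<open>v \<in> F u\<close> \<open>0 < r\<close> by auto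
  qed
qed

lemma sur_ge_if_sur_rates:
  assumes "0 < q" and rates: "\<And>r. 0 < r \<Longrightarrow> r < q \<Longrightarrow> r \<in> sur_rates F xb yb"
  shows "ereal q \<le> sur F xb yb"
proof -
  have "sur_rates F xb yb \<noteq> {}" using rates[of "q / 2"] \<open>0 < q\<close> by auto
  moreover have "ereal q \<le> Sup (ereal ` sur_rates F xb yb)"
    unfolding le_SUP_iff
  proof (intro allI impI)
    fix y assume "y < ereal q"
    then obtain z where "y < ereal z" and "z < q" using ereal_dense2 by fastforce
    then have "max z (q / 2) \<in> sur_rates F xb yb" using rates \<open>0 < q\<close> by simp
    moreover have "y < ereal (max z (q / 2))" using \<open>y < ereal z\<close> by (simp add: less_le_trans)
    ultimately show "\<exists>r\<in>sur_rates F xb yb. y < ereal r" by blast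
  qed
  ultimately show ?thesis by (simp add: sur_def)
qed

theorem mainTheorem7:
  fixes F :: "'a::banach \<Rightarrow> 'b::banach set"
    and xb :: 'a and yb :: 'b and W :: "('a \<times> 'b) set" and c lam :: real
  assumes "locally_closed_graph F xb yb"
    and "(xb, yb) \<in> graph F"
    and "open W" and "(xb, yb) \<in> W"
    and "c > 0" and "0 \<le> lam" and "lam < 1"
    and "\<forall>(x, y) \<in> W \<inter> graph F.
           (SUP z\<in>sphere (0::'b) 1. ereal (infdist z (contingent_derivative_ball F x y c))) \<le> ereal lam"
  shows "sur F xb yb \<ge> ereal ((1 - lam) / c)"
proof -
  obtain \<rho> where "0 < \<rho>" and closed_\<rho>: "closed (graph F \<inter> (cball xb \<rho> \<times> cball yb \<rho>))"
    using assms(1) unfolding locally_closed_graph_def by blast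
  obtain e where "0 < e" and "ball (xb, yb) e \<subseteq> W"
    using assms(3,4) open_contains_ball by blast
  define R where "R = min \<rho> (e / 2)"
  have "0 < R" using \<open>0 < \<rho>\<close> \<open>0 < e\<close> by (simp add: R_def)
  have "graph F \<inter> (cball xb R \<times> cball yb R) =
      graph F \<inter> (cball xb \<rho> \<times> cball yb \<rho>) \<inter> (cball xb R \<times> cball yb R)"
    by (auto simp: R_def)
  then have closed: "closed (graph F \<inter> (cball xb R \<times> cball yb R))"
    using closed_\<rho> by (simp add: closed_Int closed_Times)
  have regular: "\<forall>z\<in>sphere 0 1. infdist z (contingent_derivative_ball F x y c) \<le> lam"
    if "(x, y) \<in> graph F" "dist x xb < R" "dist y yb < R" for x y
  proof -
    have "dist (x, y) (xb, yb) < e"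
      using dist_le_dist_fst_plus_dist_snd[of "(x, y)" "(xb, yb)"] that(2,3) by (simp add: R_def)
    then have "(x, y) \<in> W" using \<open>ball (xb, yb) e \<subseteq> W\<close> by (auto simp: dist_commute)
    then show ?thesis using assms(8) that(1) by (auto simp: SUP_le_iff)
  qed
  define q where "q = (1 - lam) / c"
  have "ereal q \<le> sur F xb yb"
  proof (rule sur_ge_if_sur_rates)
    show "0 < q" using assms(5,7) by (simp add: q_def)
    fix r assume "0 < r" and "r < q"
    define r' where "r' = (r + q) / 2"
    have "r < r'" and "r' < q" using \<open>r < q\<close> by (simp_all add: r'_def)
    then have "r' * c < 1 - lam" using assms(5) by (simp add: q_def pos_less_divide_eq)
    moreover have "0 < r'" using \<open>0 < r\<close> \<open>r < r'\<close> by simp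
    ultimately obtain \<delta> where "0 < \<delta>" and "\<And>x y v. (x, y) \<in> graph F \<Longrightarrow> dist x xb < \<delta> \<Longrightarrow>
        dist y yb < \<delta> \<Longrightarrow> dist v y < \<delta> \<Longrightarrow> \<exists>u. v \<in> F u \<and> dist u x \<le> dist y v / r'"
      using local_covering[OF closed \<open>0 < R\<close> regular less_imp_le[OF assms(5)]] by blast
    then show "r \<in> sur_rates F xb yb"
      using local_covering_imp_sur_rate[OF assms(2)] \<open>0 < r\<close> \<open>r < r'\<close> by blast
  qed
  then show ?thesis by (simp add: q_def)
qed

end
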